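(* Let $k,\ell\ge1$, $m=k+\ell+1$ and $\delta\in(0,1)$. Let $S_k$ (hub $h_k$, leaves $a_1,\dots,a_k$) and $S_\ell$ (hub $h_\ell$, leaves $b_1,\dots,b_\ell$) be disjoint stars. Let $T^{hh}$ be obtained by adding the edge $\{h_k,h_\ell\}$ and $T^{ll}$ by adding instead the edge $\{a_1,b_1\}$; in each case $\mathcal H$ is the edge set of the resulting tree and the conference is the whole vertex set $C_1=V(S_k)\cup V(S_\ell)$. Let $b^{\mathrm{hub}}_{\mathrm{eff}}$ be the effective bias in $T^{hh}$ with sender $h_k$, receiver $h_\ell$, witnesses $C_1\setminus\{h_k,h_\ell\}$, and $b^{\mathrm{leaf}}_{\mathrm{eff}}$ the effective bias in $T^{ll}$ with sender $a_1$, receiver $b_1$, witnesses $C_1\setminus\{a_1,b_1\}$. Let $\Delta(\delta):=b^{\mathrm{hub}}_{\mathrm{eff}}-b^{\mathrm{leaf}}_{\mathrm{eff}}$. Then: if $(k,\ell)=(1,1)$, $\Delta\equiv0$; if $(k,\ell)\notin\{(1,1),(2,2)\}$, $\Delta(\delta)>0$ for all $\delta\in(0,1)$; and if $(k,\ell)=(2,2)$, $\Delta$ changes sign at a single point $\delta_c\approx0.9949$ of $(0,1)$, being positive on $(0,\delta_c)$ and negative on $(\delta_c,1)$. Consequently, by the Partition–Threshold rule, except for $(k,\ell)=(2,2)$ with $\delta>\delta_c$, the leaf–leaf protocol yields weakly more equilibrium partitions than the hub–hub protocol.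
   Context: For a finite simple undirected graph $G=(V,E)$ and $\delta\in(0,1)$: $v^G(S):=\sum_{i\in S}\sum_{j\in S,\,j\neq i}\delta^{t_{ij}(G[S])}$ for $S\subseteq V$, where $t_{ij}(G[S])$ is the distance in the induced subgraph ($\infty$ if disconnected, $\delta^\infty:=0$). For a conference structure $\mathcal H$ and $C\subseteq V$, $C/\mathcal H$ is the partition of $C$ into classes connected via chains of pairwise-intersecting members of $\mathcal H$ contained in $C$; $r^{v^G}_{\mathcal H}(C):=\sum_{B\in C/\mathcal H}v^G(B)$; for $X\subseteq V$, $\mathcal H|_X:=\{H\in\mathcal H:H\subseteq X\}$. $\mu_j(X;u)$ denotes the Shapley value of player $j$ in the TU game $u$ on player set $X$. Bargaining-power components: $b^j_i:=\mu_j(V;r^{v^G}_{\mathcal H})-\mu_j(V\setminus\{i\};r^{v^G}_{\mathcal H|_{V\setminus\{i\}}})$. Effective bias with sender $S$, receiver $R$, witness set $W$: $b_{\mathrm{eff}}:=\bigl(b^S_R+\sum_{w\in W}(b^S_w+b^w_R)\bigr)/(|W|+1)$. Partition–Threshold rule: the number of intervals of the Pareto-superior equilibrium is the unique integer $N\ge1$ with $\beta(N)\le b_{\mathrm{eff}}<\beta(N-1)$, where $\beta(N)=\frac1{2N(N+1)}$, $\beta(0)=+\infty$; it is non-increasing in $b_{\mathrm{eff}}$. *)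

theory Defs
  imports Complex_Main
begin

text \<open>A finite simple undirected graph is given by an edge set E of two-element
vertex sets. A walk of length n from i to j inside S (i.e. in the induced subgraph G[S]).\<close>

definition walk_in :: "'a set set \<Rightarrow> 'a set \<Rightarrow> 'a \<Rightarrow> 'a \<Rightarrow> nat \<Rightarrow> bool" where
  "walk_in E S i j n \<longleftrightarrow> (\<exists>p :: 'a list. length p = Suc n \<and> hd p = i \<and> last p = j \<and>
       set p \<subseteq> S \<and> (\<forall>t<n. {p ! t, p ! Suc t} \<in> E))"

text \<open>Distance t_ij(G[S]) (only meaningful when a walk exists).\<close>
definition dist_in :: "'a set set \<Rightarrow> 'a set \<Rightarrow> 'a \<Rightarrow> 'a \<Rightarrow> nat" where
  "dist_in E S i j = (LEAST n. walk_in E S i j n)"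

text \<open>delta ^ t_ij(G[S]) with the convention delta ^ infinity = 0.\<close>
definition dpow :: "real \<Rightarrow> 'a set set \<Rightarrow> 'a set \<Rightarrow> 'a \<Rightarrow> 'a \<Rightarrow> real" where
  "dpow \<delta> E S i j = (if \<exists>n. walk_in E S i j n then \<delta> ^ dist_in E S i j else 0)"

definition vG :: "real \<Rightarrow> 'a set set \<Rightarrow> 'a set \<Rightarrow> real" where
  "vG \<delta> E S = (\<Sum>i\<in>S. \<Sum>j\<in>S - {i}. dpow \<delta> E S i j)"

text \<open>Two points of C are related if some member of H contained in C contains both;
C/H is the partition of C into classes of the reflexive-transitive closure (chains of
pairwise-intersecting members of H contained in C).\<close>
definition comem :: "'a set \<Rightarrow> 'a set set \<Rightarrow> ('a \<times> 'a) set" where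
  "comem C H = {(x, y). \<exists>h\<in>H. h \<subseteq> C \<and> x \<in> h \<and> y \<in> h}"

definition conf_classes :: "'a set \<Rightarrow> 'a set set \<Rightarrow> 'a set set" where
  "conf_classes C H = C // (Id_on C \<union> (comem C H)\<^sup>+)"

definition rgame :: "real \<Rightarrow> 'a set set \<Rightarrow> 'a set set \<Rightarrow> 'a set \<Rightarrow> real" where
  "rgame \<delta> E H C = (\<Sum>B\<in>conf_classes C H. vG \<delta> E B)"

definition restr :: "'a set set \<Rightarrow> 'a set \<Rightarrow> 'a set set" where
  "restr H X = {h \<in> H. h \<subseteq> X}"

definition shapley :: "'a set \<Rightarrow> ('a set \<Rightarrow> real) \<Rightarrow> 'a \<Rightarrow> real" where
  "shapley X u j = (\<Sum>S\<in>Pow (X - {j}).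
      (fact (card S) * fact (card X - card S - 1) / fact (card X)) * (u (insert j S) - u S))"

definition bpow :: "real \<Rightarrow> 'a set set \<Rightarrow> 'a set \<Rightarrow> 'a set set \<Rightarrow> 'a \<Rightarrow> 'a \<Rightarrow> real" where
  "bpow \<delta> E V H j i = shapley V (rgame \<delta> E H) j
       - shapley (V - {i}) (rgame \<delta> E (restr H (V - {i}))) j"

definition beff :: "real \<Rightarrow> 'a set set \<Rightarrow> 'a set \<Rightarrow> 'a set set \<Rightarrow> 'a \<Rightarrow> 'a \<Rightarrow> 'a set \<Rightarrow> real" where
  "beff \<delta> E V H s r W =
     (bpow \<delta> E V H s r + (\<Sum>w\<in>W. bpow \<delta> E V H s w + bpow \<delta> E V H w r)) / (real (card W) + 1)"

definition beta :: "nat \<Rightarrow> real" where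
  "beta N = 1 / (2 * real N * (real N + 1))"

text \<open>N is the number of intervals given by the rule for bias b
  (beta(0) = +infinity, so the upper bound is vacuous for N = 1).\<close>
definition pt_count :: "real \<Rightarrow> nat \<Rightarrow> bool" where
  "pt_count b N \<longleftrightarrow> N \<ge> 1 \<and> beta N \<le> b \<and> (N = 1 \<or> b < beta (N - 1))"

datatype vtx = HK | A nat | HL | B nat

definition starsV :: "nat \<Rightarrow> nat \<Rightarrow> vtx set" where
  "starsV k l = {HK, HL} \<union> A ` {1..k} \<union> B ` {1..l}"

definition starsE :: "nat \<Rightarrow> nat \<Rightarrow> vtx set set" where
  "starsE k l = (\<lambda>i. {HK, A i}) ` {1..k} \<union> (\<lambda>j. {HL, B j}) ` {1..l}"

definition Thh :: "nat \<Rightarrow> nat \<Rightarrow> vtx set set" where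
  "Thh k l = insert {HK, HL} (starsE k l)"

definition Tll :: "nat \<Rightarrow> nat \<Rightarrow> vtx set set" where
  "Tll k l = insert {A 1, B 1} (starsE k l)"

definition b_hub :: "nat \<Rightarrow> nat \<Rightarrow> real \<Rightarrow> real" where
  "b_hub k l \<delta> = beff \<delta> (Thh k l) (starsV k l) (Thh k l) HK HL (starsV k l - {HK, HL})"

definition b_leaf :: "nat \<Rightarrow> nat \<Rightarrow> real \<Rightarrow> real" where
  "b_leaf k l \<delta> = beff \<delta> (Tll k l) (starsV k l) (Tll k l) (A 1) (B 1) (starsV k l - {A 1, B 1})"

definition Delta :: "nat \<Rightarrow> nat \<Rightarrow> real \<Rightarrow> real" where
  "Delta k l \<delta> = b_hub k l \<delta> - b_leaf k l \<delta>"

definition leaf_weakly_more :: "nat \<Rightarrow> nat \<Rightarrow> real \<Rightarrow> bool" where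
  "leaf_weakly_more k l \<delta> \<longleftrightarrow>
     (\<forall>Nh Nl. pt_count (b_hub k l \<delta>) Nh \<and> pt_count (b_leaf k l \<delta>) Nl \<longrightarrow> Nh \<le> Nl)"

end

theory Submission
  imports Defs
begin

(*
  On a tree every conference class of the edge structure is a union of components, so the
  game r coincides with v^G, and v^G is the sum over ordered pairs (p, q) of delta^d(p,q) times
  the unanimity game of the path from p to q.  The Shapley value of that unanimity game gives
  1/(d + 1) to each of the d + 1 path vertices, hence b^j_i is the sum of delta^d/(d + 1) over
  the pairs whose path contains both i and j, and b_eff becomes a weighted count of pairs.
  Both two-star trees are caterpillars, where distances and paths are explicit, and the count
  gives (k + l + 1) Delta = gap_poly (k - 1) (l - 1) delta.  This polynomial vanishes for
  k = l = 1, is positive on (0, 1) unless k = l = 2, and for k = l = 2 it is delta times a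
  quartic that is positive on (0, 3/5] and strictly decreasing on [3/5, 1], with its single
  root between 0.9948 and 0.9950.  Finally the Partition-Threshold count is antitone in the bias.
*)

section \<open>Walks\<close>

lemma walk_in_0_iff: "walk_in E S x y 0 \<longleftrightarrow> x = y \<and> x \<in> S"
proof
  assume "walk_in E S x y 0"
  then obtain p where "length p = 1" "hd p = x" "last p = y" "set p \<subseteq> S"
    unfolding walk_in_def by auto
  then show "x = y \<and> x \<in> S"
    by (cases p) auto
next
  assume "x = y \<and> x \<in> S"
  then show "walk_in E S x y 0"
    unfolding walk_in_def by (intro exI[of _ "[x]"]) auto
qed

lemma walk_in_Suc_iff:
  "walk_in E S x y (Suc n) \<longleftrightarrow> (\<exists>z. x \<in> S \<and> {x, z} \<in> E \<and> walk_in E S z y n)"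
proof
  assume "walk_in E S x y (Suc n)"
  then obtain p where p: "length p = Suc (Suc n)" "hd p = x" "last p = y" "set p \<subseteq> S"
    "\<forall>t<Suc n. {p ! t, p ! Suc t} \<in> E"
    unfolding walk_in_def by auto
  then obtain p' where p': "p = x # p'"
    by (cases p) auto
  with p(1) have "p' \<noteq> []"
    by auto
  have "walk_in E S (hd p') y n"
    unfolding walk_in_def using p p' \<open>p' \<noteq> []\<close> by (intro exI[of _ p']) auto
  moreover have "{x, hd p'} \<in> E"
    using p(5) p' \<open>p' \<noteq> []\<close> by (metis hd_conv_nth nth_Cons_0 nth_Cons_Suc zero_less_Suc)
  ultimately show "\<exists>z. x \<in> S \<and> {x, z} \<in> E \<and> walk_in E S z y n"
    using p p' by auto
next
  assume "\<exists>z. x \<in> S \<and> {x, z} \<in> E \<and> walk_in E S z y n"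
  then obtain z p where "x \<in> S" "{x, z} \<in> E" and p: "length p = Suc n" "hd p = z"
    "last p = y" "set p \<subseteq> S" "\<forall>t<n. {p ! t, p ! Suc t} \<in> E"
    unfolding walk_in_def by auto
  moreover have "p \<noteq> []"
    using p(1) by auto
  then have "{(x # p) ! t, (x # p) ! Suc t} \<in> E" if "t < Suc n" for t
    using that p \<open>{x, z} \<in> E\<close> by (cases t) (auto simp: hd_conv_nth)
  ultimately show "walk_in E S x y (Suc n)"
    unfolding walk_in_def by (intro exI[of _ "x # p"]) auto
qed

lemma walk_in_mono: "walk_in E S x y n \<Longrightarrow> S \<subseteq> S' \<Longrightarrow> walk_in E S' x y n"
  unfolding walk_in_def by blast

lemma walk_in_endpoints: "walk_in E S x y n \<Longrightarrow> x \<in> S \<and> y \<in> S"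
  unfolding walk_in_def by (metis hd_in_set last_in_set list.size(3) nat.distinct(1) subsetD)

lemma walk_in_on_vertices:
  "walk_in E S x y n \<Longrightarrow> \<exists>L. card L \<le> Suc n \<and> L \<subseteq> S \<and> walk_in E L x y n"
  unfolding walk_in_def by (metis card_length order_refl)

lemma walk_in_split:
  "walk_in E S x y n \<Longrightarrow> d \<le> n \<Longrightarrow> \<exists>z. walk_in E S x z d \<and> walk_in E S z y (n - d)"
proof (induction d arbitrary: x n)
  case 0
  then show ?case
    using walk_in_endpoints[OF 0(1)] by (auto simp: walk_in_0_iff)
next
  case (Suc d)
  then obtain n' where n: "n = Suc n'"
    by (cases n) auto
  with Suc.prems obtain z where "x \<in> S" "{x, z} \<in> E" "walk_in E S z y n'"
    by (auto simp: walk_in_Suc_iff)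
  with Suc.IH[of z n'] Suc.prems n show ?case
    by (auto simp: walk_in_Suc_iff)
qed

section \<open>Caterpillars\<close>

text \<open>A caterpillar is encoded by placing its spine vertices (\<open>leg = 0\<close>) at consecutive
  integer positions and each remaining vertex (\<open>leg = 1\<close>) at the position of the spine
  vertex it hangs from; the tree distance is then \<open>cat_dist\<close>.\<close>

definition cat_dist :: "('a \<Rightarrow> int) \<Rightarrow> ('a \<Rightarrow> nat) \<Rightarrow> 'a \<Rightarrow> 'a \<Rightarrow> nat" where
  "cat_dist pos leg x y = (if x = y then 0 else nat \<bar>pos x - pos y\<bar> + leg x + leg y)"

locale caterpillar =
  fixes V :: "'a set" and E :: "'a set set" and pos :: "'a \<Rightarrow> int" and leg :: "'a \<Rightarrow> nat"
  assumes finite_V: "finite V"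
    and leg_le_1: "leg x \<le> 1"
    and spine_inj: "x \<in> V \<Longrightarrow> y \<in> V \<Longrightarrow> leg x = 0 \<Longrightarrow> leg y = 0 \<Longrightarrow> pos x = pos y \<Longrightarrow> x = y"
    and spine_interval:
      "x \<in> V \<Longrightarrow> y \<in> V \<Longrightarrow> pos x \<le> z \<Longrightarrow> z \<le> pos y \<Longrightarrow> \<exists>w\<in>V. leg w = 0 \<and> pos w = z"
    and edges_eq: "E = {{x, y} | x y. x \<in> V \<and> y \<in> V \<and> cat_dist pos leg x y = 1}"
begin

abbreviation cdist :: "'a \<Rightarrow> 'a \<Rightarrow> nat" where
  "cdist \<equiv> cat_dist pos leg"

definition interval :: "'a \<Rightarrow> 'a \<Rightarrow> 'a set" where
  "interval x y = {v \<in> V. cdist x v + cdist v y = cdist x y}"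

lemma cdist_self [simp]: "cdist x x = 0"
  by (simp add: cat_dist_def)

lemma cdist_commute: "cdist x y = cdist y x"
  by (auto simp: cat_dist_def abs_minus_commute)

lemma cdist_eq_0_iff: "x \<in> V \<Longrightarrow> y \<in> V \<Longrightarrow> cdist x y = 0 \<longleftrightarrow> x = y"
  using spine_inj[of x y] by (auto simp: cat_dist_def)

lemma cdist_triangle: "cdist x z \<le> cdist x y + cdist y z"
  by (auto simp: cat_dist_def)

lemma int_cdist: "x \<noteq> y \<Longrightarrow> int (cdist x y) = \<bar>pos x - pos y\<bar> + int (leg x) + int (leg y)"
  by (simp add: cat_dist_def)

lemma edge_iff: "{x, y} \<in> E \<longleftrightarrow> x \<in> V \<and> y \<in> V \<and> cdist x y = 1"
  by (auto simp: edges_eq doubleton_eq_iff cdist_commute)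

lemma interval_neighbour:
  assumes "x \<in> V" "y \<in> V" "q \<in> V" "cdist x y = 1" "v \<noteq> x" "v \<in> interval x q"
  shows "v \<in> interval y q"
proof (cases "v = q \<or> v = y")
  case True
  then show ?thesis
    using assms(6) by (auto simp: interval_def)
next
  case False
  then have "v \<noteq> q" "y \<noteq> v"
    by auto
  have v: "v \<in> V" "cdist x v + cdist v q = cdist x q"
    using assms(6) by (auto simp: interval_def)
  have "x \<noteq> q"
    using v assms cdist_eq_0_iff[of x v] by auto
  then have "\<bar>pos x - pos v\<bar> + \<bar>pos v - pos q\<bar> + 2 * int (leg v) = \<bar>pos x - pos q\<bar>"
    using arg_cong[OF v(2), of int] int_cdist[of x v] int_cdist[of v q] int_cdist[of x q]
      \<open>v \<noteq> q\<close> assms(5)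
    by simp
  then have leg_v: "leg v = 0" and between: "\<bar>pos x - pos v\<bar> + \<bar>pos v - pos q\<bar> = \<bar>pos x - pos q\<bar>"
    by (auto simp: abs_if split: if_splits)
  have xy: "\<bar>pos x - pos y\<bar> + int (leg x) + int (leg y) = 1"
    using arg_cong[OF assms(4), of int] int_cdist[of x y] assms(4) by fastforce
  have "leg x = 1 \<or> pos v \<noteq> pos x"
    using spine_inj[of x v] assms v leg_v leg_le_1[of x] by fastforce
  have "leg q = 1 \<or> pos v \<noteq> pos q"
    using spine_inj[of q v] assms v leg_v \<open>v \<noteq> q\<close> leg_le_1[of q] by fastforce
  have "y \<noteq> q"
  proof
    assume "y = q"
    then show False
      using xy[unfolded \<open>y = q\<close>] between \<open>leg q = 1 \<or> pos v \<noteq> pos q\<close>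
        \<open>leg x = 1 \<or> pos v \<noteq> pos x\<close> leg_le_1[of x] leg_le_1[of q]
      by arith
  qed
  have "\<bar>pos y - pos v\<bar> + \<bar>pos v - pos q\<bar> = \<bar>pos y - pos q\<bar>"
    using xy between \<open>leg x = 1 \<or> pos v \<noteq> pos x\<close> leg_le_1[of x] leg_le_1[of y] by arith
  then have "int (cdist y v + cdist v q) = int (cdist y q)"
    using int_cdist[of y v] int_cdist[of v q] int_cdist[of y q] \<open>v \<noteq> q\<close> \<open>y \<noteq> v\<close> \<open>y \<noteq> q\<close>
      leg_v
    by simp
  then show ?thesis
    using v(1) by (simp add: interval_def)
qed

lemma walk_in_bounds:
  "S \<subseteq> V \<Longrightarrow> walk_in E S x y n \<Longrightarrow> cdist x y \<le> n \<and> interval x y \<subseteq> S"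
proof (induction n arbitrary: x)
  case 0
  then show ?case
    by (auto simp: walk_in_0_iff interval_def cdist_eq_0_iff)
next
  case (Suc n)
  then obtain z where z: "x \<in> S" "{x, z} \<in> E" "walk_in E S z y n"
    by (auto simp: walk_in_Suc_iff)
  have IH: "cdist z y \<le> n" "interval z y \<subseteq> S"
    using Suc.IH[OF Suc.prems(1) z(3)] by auto
  have xz: "x \<in> V" "z \<in> V" "cdist x z = 1"
    using z(2) by (auto simp: edge_iff)
  have "cdist x y \<le> Suc n"
    using cdist_triangle[of x y z] IH xz by simp
  moreover have "v \<in> S" if "v \<in> interval x y" for v
  proof (cases "v = x")
    case False
    then have "v \<in> interval z y"
      using interval_neighbour[OF xz(1,2) _ xz(3) _ that] walk_in_endpoints[OF z(3)] Suc.prems(1)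
      by auto
    then show ?thesis
      using IH by auto
  qed (use z in simp)
  ultimately show ?case
    by auto
qed

lemma step_towards:
  assumes "x \<in> V" "y \<in> V" "x \<noteq> y"
  shows "\<exists>z\<in>V. cdist x z = 1 \<and> cdist z y + 1 = cdist x y"
proof -
  have step: "\<exists>z\<in>V. cdist x z = 1 \<and> cdist z y + 1 = cdist x y"
    if w: "w \<in> V" "leg w = 0" "w \<noteq> x" "\<bar>pos x - pos w\<bar> + leg x = 1"
      "\<bar>pos x - pos y\<bar> + leg x = 1 + \<bar>pos w - pos y\<bar>" for w
  proof (intro bexI conjI)
    show "cdist x w = 1"
      using int_cdist[of x w] w by simp
    show "cdist w y + 1 = cdist x y"
    proof (cases "w = y")
      case False
      then show ?thesis
        using int_cdist[of w y] int_cdist[of x y] assms w by simp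
    qed (use \<open>cdist x w = 1\<close> in simp)
  qed (rule w(1))
  consider "leg x = 1" | "leg x = 0" "pos y = pos x" | "leg x = 0" "pos y \<noteq> pos x"
    using leg_le_1[of x] by linarith
  then show ?thesis
  proof cases
    case 1
    obtain w where "w \<in> V" "leg w = 0" "pos w = pos x"
      using spine_interval[of x x "pos x"] assms by auto
    then show ?thesis
      using 1 by (intro step[of w]) auto
  next
    case 2
    then have "leg y = 1"
      using spine_inj[of x y] assms leg_le_1[of y] by (fastforce simp: le_Suc_eq)
    then have "cdist x y = 1"
      using int_cdist[of x y] assms 2 by simp
    then show ?thesis
      using assms by auto
  next
    case 3
    define p where "p = pos x + sgn (pos y - pos x)"
    have "min (pos x) (pos y) \<le> p" "p \<le> max (pos x) (pos y)"
      using 3 by (auto simp: p_def sgn_if)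
    then obtain w where "w \<in> V" "leg w = 0" "pos w = p"
      using spine_interval[of x y p] spine_interval[of y x p] assms
      by (cases "pos x \<le> pos y") auto
    then show ?thesis
      using 3 by (intro step[of w]) (auto simp: p_def sgn_if split: if_splits)
  qed
qed

lemma walk_in_interval:
  "x \<in> V \<Longrightarrow> y \<in> V \<Longrightarrow> interval x y \<subseteq> S \<Longrightarrow> walk_in E S x y (cdist x y)"
proof (induction "cdist x y" arbitrary: x)
  case 0
  then show ?case
    by (auto simp: walk_in_0_iff cdist_eq_0_iff interval_def)
next
  case (Suc n)
  then obtain z where z: "z \<in> V" "cdist x z = 1" "cdist z y + 1 = cdist x y"
    using step_towards[of x y] by fastforce
  have "interval z y \<subseteq> interval x y"
  proof
    fix v
    assume "v \<in> interval z y"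
    then show "v \<in> interval x y"
      using cdist_triangle[of x v z] cdist_triangle[of x y v] z by (auto simp: interval_def)
  qed
  moreover have "cdist z y = n"
    using Suc.hyps(2) z(3) by simp
  ultimately have "walk_in E S z y n"
    using Suc.hyps(1)[of z] Suc.prems z by blast
  moreover have "x \<in> S"
    using Suc.prems by (auto simp: interval_def)
  ultimately show ?case
    using Suc.hyps(2)[symmetric] z Suc.prems by (auto simp: walk_in_Suc_iff edge_iff)
qed

lemma dpow_eq:
  assumes "S \<subseteq> V" "x \<in> V" "y \<in> V"
  shows "dpow \<delta> E S x y = (if interval x y \<subseteq> S then \<delta> ^ cdist x y else 0)"
proof (cases "interval x y \<subseteq> S")
  case True
  then have "dist_in E S x y = cdist x y"
    unfolding dist_in_def
    using walk_in_interval[OF assms(2,3)] walk_in_bounds[OF assms(1)] by (intro Least_equality) auto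
  then show ?thesis
    unfolding dpow_def using True walk_in_interval[OF assms(2,3)] by auto
next
  case False
  then show ?thesis
    unfolding dpow_def using walk_in_bounds[OF assms(1)] by auto
qed

lemma card_interval:
  assumes "x \<in> V" "y \<in> V"
  shows "card (interval x y) = cdist x y + 1"
proof (rule antisym)
  have IV: "interval x y \<subseteq> V"
    by (auto simp: interval_def)
  have walk: "walk_in E (interval x y) x y (cdist x y)"
    using walk_in_interval[OF assms order_refl] .
  then obtain L where L: "card L \<le> cdist x y + 1" "L \<subseteq> interval x y" "walk_in E L x y (cdist x y)"
    using walk_in_on_vertices by fastforce
  then have "interval x y \<subseteq> L"
    using walk_in_bounds[of L] IV by blast
  then show "card (interval x y) \<le> cdist x y + 1"
    using L(1,2) by auto
  have "{0..cdist x y} \<subseteq> cdist x ` interval x y"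
  proof
    fix n
    assume "n \<in> {0..cdist x y}"
    then obtain z where z: "walk_in E (interval x y) x z n"
      "walk_in E (interval x y) z y (cdist x y - n)"
      using walk_in_split[OF walk] by auto
    then have "cdist x z = n"
      using walk_in_bounds[OF IV z(1)] walk_in_bounds[OF IV z(2)] cdist_triangle[of x y z]
        \<open>n \<in> {0..cdist x y}\<close> by auto
    then show "n \<in> cdist x ` interval x y"
      using walk_in_endpoints[OF z(2)] by auto
  qed
  then have "card {0..cdist x y} \<le> card (cdist x ` interval x y)"
    using finite_V IV by (intro card_mono) (auto intro: finite_subset)
  also have "\<dots> \<le> card (interval x y)"
    using finite_V IV by (intro card_image_le) (auto intro: finite_subset)
  finally show "cdist x y + 1 \<le> card (interval x y)"
    by simp
qed

end

section \<open>Shapley value of unanimity games\<close>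

lemma sum_Pow_card:
  assumes "finite Y"
  shows "(\<Sum>T\<in>Pow Y. g (card T)) = (\<Sum>t\<le>card Y. of_nat (card Y choose t) * (g t :: real))"
proof -
  have "(\<Sum>T\<in>Pow Y. g (card T)) = (\<Sum>t\<le>card Y. \<Sum>T\<in>{T \<in> Pow Y. card T = t}. g (card T))"
    using assms by (intro sum.group[symmetric]) (auto intro: card_mono)
  also have "\<dots> = (\<Sum>t\<le>card Y. of_nat (card Y choose t) * g t)"
    using n_subsets[OF assms] by (intro sum.cong) (auto simp: Pow_def)
  finally show ?thesis .
qed

text \<open>The Shapley weights for \<open>|X| = m + r + 1\<close> and \<open>|S| = t + r\<close>, summed over the
  \<open>t\<close>-subsets of an \<open>m\<close>-set.\<close>

lemma sum_shapley_weights: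
  "(\<Sum>t\<le>m. of_nat (m choose t) * (fact (t + r) * fact (m + Suc r - (t + r) - 1) / fact (m + Suc r)))
     = (1::real) / real (Suc r)"
proof -
  have "(\<Sum>t\<le>m. of_nat (m choose t)
        * (fact (t + r) * fact (m + Suc r - (t + r) - 1) / fact (m + Suc r)))
      = (\<Sum>t\<le>m. (fact m * fact r / fact (m + Suc r)) * of_nat ((r + t) choose t) :: real)"
  proof (rule sum.cong[OF refl])
    fix t
    assume "t \<in> {..m}"
    then have "(of_nat (m choose t) :: real) = fact m / (fact t * fact (m - t))"
      by (simp add: binomial_fact)
    moreover have "(of_nat ((r + t) choose t) :: real) = fact (r + t) / (fact t * fact r)"
      by (simp add: binomial_fact)
    moreover have "m + Suc r - (t + r) - 1 = m - t"
      by simp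
    ultimately show "of_nat (m choose t)
        * (fact (t + r) * fact (m + Suc r - (t + r) - 1) / fact (m + Suc r))
      = (fact m * fact r / fact (m + Suc r)) * (of_nat ((r + t) choose t) :: real)"
      by (simp only:) (simp add: field_simps add.commute)
  qed
  also have "\<dots> = (fact m * fact r / fact (m + Suc r)) * of_nat (\<Sum>t\<le>m. (r + t) choose t)"
    by (simp add: sum_distrib_left)
  also have "(\<Sum>t\<le>m. (r + t) choose t) = Suc (r + m) choose m"
    by (rule sum_choose_lower)
  also have "(of_nat (Suc (r + m) choose m) :: real) = fact (m + Suc r) / (fact m * fact (Suc r))"
    using binomial_fact[of m "Suc (r + m)"] by (simp add: add.commute)
  also have "(fact m * fact r / fact (m + Suc r)) * (fact (m + Suc r) / (fact m * fact (Suc r)))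
      = (fact r / fact (Suc r) :: real)"
    by simp
  also have "\<dots> = 1 / real (Suc r)"
    by (simp add: fact_Suc del: of_nat_Suc)
  finally show ?thesis .
qed

lemma sum_Pow_supersets:
  assumes "finite X" "Q \<subseteq> X"
  shows "(\<Sum>S\<in>Pow X. if Q \<subseteq> S then g (card S) else 0) = (\<Sum>T\<in>Pow (X - Q). g (card T + card Q))"
proof -
  have "(\<Sum>S\<in>Pow X. if Q \<subseteq> S then g (card S) else 0) = (\<Sum>S\<in>{S \<in> Pow X. Q \<subseteq> S}. g (card S))"
    using assms by (intro sum.inter_filter[symmetric]) simp
  also have "{S \<in> Pow X. Q \<subseteq> S} = (\<lambda>T. T \<union> Q) ` Pow (X - Q)"
  proof (intro set_eqI iffI)
    fix S
    assume "S \<in> {S \<in> Pow X. Q \<subseteq> S}"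
    then have "S = (S - Q) \<union> Q" "S - Q \<in> Pow (X - Q)"
      by auto
    then show "S \<in> (\<lambda>T. T \<union> Q) ` Pow (X - Q)"
      by blast
  qed (use assms in auto)
  also have "(\<Sum>S\<in>(\<lambda>T. T \<union> Q) ` Pow (X - Q). g (card S)) = (\<Sum>T\<in>Pow (X - Q). g (card T + card Q))"
  proof (rule sum.reindex_cong)
    show "inj_on (\<lambda>T. T \<union> Q) (Pow (X - Q))"
      by (rule inj_onI) auto
    show "g (card (T \<union> Q)) = g (card T + card Q)" if "T \<in> Pow (X - Q)" for T
      using that assms finite_subset[of T X] finite_subset[of Q X] by (subst card_Un_disjoint) auto
  qed simp
  finally show ?thesis .
qed

lemma shapley_unanimity:
  assumes "finite X" "j \<in> X"
  shows "shapley X (\<lambda>S. if P \<subseteq> S then 1 else 0) j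
    = (if P \<subseteq> X \<and> j \<in> P then 1 / real (card P) else 0)"
proof (cases "P \<subseteq> X \<and> j \<in> P")
  case True
  define w :: "nat \<Rightarrow> real" where "w s = fact s * fact (card X - s - 1) / fact (card X)" for s
  define Q where "Q = P - {j}"
  have "finite P"
    using True assms finite_subset by blast
  then have card_P: "card P = Suc (card Q)"
    using True unfolding Q_def by (metis card_Suc_Diff1)
  have "card X = card (X - P) + Suc (card Q)"
    using True assms \<open>finite P\<close> card_P by (metis card_Diff_subset card_mono le_add_diff_inverse2)
  have "shapley X (\<lambda>S. if P \<subseteq> S then 1 else 0) j
      = (\<Sum>S\<in>Pow (X - {j}). if Q \<subseteq> S then w (card S) else 0)"
    unfolding shapley_def w_def Q_def using True by (intro sum.cong) auto
  also have "\<dots> = (\<Sum>T\<in>Pow (X - {j} - Q). w (card T + card Q))"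
    using assms True by (intro sum_Pow_supersets) (auto simp: Q_def)
  also have "X - {j} - Q = X - P"
    using True by (auto simp: Q_def)
  also have "(\<Sum>T\<in>Pow (X - P). w (card T + card Q))
      = (\<Sum>t\<le>card (X - P). of_nat (card (X - P) choose t) * w (t + card Q))"
    using assms by (intro sum_Pow_card) simp
  also have "\<dots> = 1 / real (card P)"
    unfolding w_def card_P \<open>card X = _\<close> using sum_shapley_weights[of "card (X - P)" "card Q"]
    by simp
  finally show ?thesis
    using True by simp
next
  case False
  then have "(if P \<subseteq> insert j S then 1 else 0) - (if P \<subseteq> S then 1 else 0) = (0::real)"
    if "S \<in> Pow (X - {j})" for S
    using that assms by auto
  then have "shapley X (\<lambda>S. if P \<subseteq> S then 1 else 0) j = 0"
    by (simp add: shapley_def)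
  then show ?thesis
    using False by (simp only: if_False)
qed

lemma shapley_cong:
  assumes "\<And>S. S \<subseteq> X \<Longrightarrow> u S = u' S" "j \<in> X"
  shows "shapley X u j = shapley X u' j"
proof -
  have "u S = u' S" "u (insert j S) = u' (insert j S)" if "S \<in> Pow (X - {j})" for S
    using that assms(2) by (auto intro!: assms(1))
  then show ?thesis
    unfolding shapley_def by simp
qed

lemma shapley_linear:
  "shapley X (\<lambda>S. \<Sum>t\<in>T. c t * g t S) j = (\<Sum>t\<in>T. c t * shapley X (g t) j)"
proof -
  have "shapley X (\<lambda>S. \<Sum>t\<in>T. c t * g t S) j =
     (\<Sum>S\<in>Pow (X - {j}). \<Sum>t\<in>T. c t * (fact (card S) * fact (card X - card S - 1) / fact (card X) *
        (g t (insert j S) - g t S)))"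
    unfolding shapley_def
    by (intro sum.cong refl)
      (simp add: sum_distrib_left sum_subtractf right_diff_distrib mult.left_commute)
  also have "\<dots> = (\<Sum>t\<in>T. c t * shapley X (g t) j)"
    unfolding shapley_def by (subst sum.swap) (simp add: sum_distrib_left)
  finally show ?thesis .
qed

section \<open>The conference game of a graph\<close>

lemma walk_in_imp_conf_related:
  assumes "\<And>h. h \<in> E \<Longrightarrow> h \<subseteq> C \<Longrightarrow> h \<in> H"
  shows "walk_in E C i j n \<Longrightarrow> (i, j) \<in> Id_on C \<union> (comem C H)\<^sup>+"
proof (induction n arbitrary: i)
  case 0
  then show ?case
    by (auto simp: walk_in_0_iff)
next
  case (Suc n)
  then obtain y where y: "i \<in> C" "{i, y} \<in> E" "walk_in E C y j n"
    by (auto simp: walk_in_Suc_iff)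
  have "y \<in> C"
    using walk_in_endpoints[OF y(3)] by simp
  then have "{i, y} \<in> H"
    using assms[OF y(2)] y(1) by blast
  then have "(i, y) \<in> comem C H"
    using y(1) \<open>y \<in> C\<close> unfolding comem_def by (simp add: bexI[of _ "{i, y}"])
  then show ?case
    using Suc.IH[OF y(3)] by (auto intro: trancl_into_trancl2)
qed

lemma equiv_conf_relation: "equiv C (Id_on C \<union> (comem C H)\<^sup>+)"
proof (rule equivI)
  have comem: "comem C H \<subseteq> C \<times> C" "sym (comem C H)"
    unfolding comem_def sym_def by auto
  then show "Id_on C \<union> (comem C H)\<^sup>+ \<subseteq> C \<times> C"
    using trancl_subset_Sigma[OF comem(1)] by auto
  show "refl_on C (Id_on C \<union> (comem C H)\<^sup>+)"
    unfolding refl_on_def by auto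
  show "sym (Id_on C \<union> (comem C H)\<^sup>+)"
    by (intro sym_Un sym_Id_on sym_trancl comem(2))
  show "trans (Id_on C \<union> (comem C H)\<^sup>+)"
    by (rule transI) (auto intro: trancl_trans)
qed

lemma vG_walk_closed:
  assumes "finite C" "K \<subseteq> C" and closed: "\<And>i j n. i \<in> K \<Longrightarrow> walk_in E C i j n \<Longrightarrow> j \<in> K"
  shows "vG \<delta> E K = (\<Sum>i\<in>K. \<Sum>j\<in>C - {i}. dpow \<delta> E C i j)"
proof -
  have walk_K: "walk_in E C i j n \<Longrightarrow> i \<in> K \<Longrightarrow> walk_in E K i j n" for i j n
  proof (induction n arbitrary: i)
    case 0
    then show ?case
      by (auto simp: walk_in_0_iff)
  next
    case (Suc n)
    then obtain y where y: "i \<in> C" "{i, y} \<in> E" "walk_in E C y j n"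
      by (auto simp: walk_in_Suc_iff)
    have "walk_in E C i y 1"
      using y walk_in_endpoints[OF y(3)] by (simp add: walk_in_Suc_iff walk_in_0_iff)
    then have "y \<in> K"
      using closed[OF Suc.prems(2)] by blast
    then show ?case
      using Suc.IH[OF y(3)] y Suc.prems(2) by (auto simp: walk_in_Suc_iff)
  qed
  have dpow_K: "dpow \<delta> E K i j = dpow \<delta> E C i j" if "i \<in> K" for i j
  proof -
    have "walk_in E K i j = walk_in E C i j"
      using walk_K[OF _ that] walk_in_mono[OF _ assms(2)] by blast
    then show ?thesis
      unfolding dpow_def dist_in_def by (simp only:)
  qed
  have zero: "dpow \<delta> E C i j = 0" if "i \<in> K" "j \<in> C - K" for i j
  proof -
    have "\<not> (\<exists>n. walk_in E C i j n)"
      using closed that by blast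
    then show ?thesis
      unfolding dpow_def by (simp only: if_False)
  qed
  have "vG \<delta> E K = (\<Sum>i\<in>K. \<Sum>j\<in>K - {i}. dpow \<delta> E C i j)"
    unfolding vG_def using dpow_K by simp
  also have "\<dots> = (\<Sum>i\<in>K. \<Sum>j\<in>C - {i}. dpow \<delta> E C i j)"
  proof (rule sum.cong[OF refl])
    fix i
    assume "i \<in> K"
    then show "(\<Sum>j\<in>K - {i}. dpow \<delta> E C i j) = (\<Sum>j\<in>C - {i}. dpow \<delta> E C i j)"
      using assms(1,2) zero by (intro sum.mono_neutral_left) auto
  qed
  finally show ?thesis .
qed

lemma rgame_eq_vG:
  assumes "finite C" and "\<And>h. h \<in> E \<Longrightarrow> h \<subseteq> C \<Longrightarrow> h \<in> H"
  shows "rgame \<delta> E H C = vG \<delta> E C"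
proof -
  define R where "R = Id_on C \<union> (comem C H)\<^sup>+"
  have eqv: "equiv C R"
    unfolding R_def by (rule equiv_conf_relation)
  have "vG \<delta> E K = (\<Sum>i\<in>K. \<Sum>j\<in>C - {i}. dpow \<delta> E C i j)" if "K \<in> C // R" for K
    using assms(1) in_quotient_imp_subset[OF eqv that]
      in_quotient_imp_closed[OF eqv that] walk_in_imp_conf_related[OF assms(2)]
    by (intro vG_walk_closed) (auto simp: R_def)
  then have "rgame \<delta> E H C = (\<Sum>K\<in>C // R. \<Sum>i\<in>K. \<Sum>j\<in>C - {i}. dpow \<delta> E C i j)"
    unfolding rgame_def conf_classes_def R_def[symmetric] by simp
  also have "\<dots> = (\<Sum>i\<in>\<Union>(C // R). \<Sum>j\<in>C - {i}. dpow \<delta> E C i j)"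
  proof (rule sum.Union_disjoint[symmetric, simplified])
    show "\<forall>K\<in>C // R. finite K"
      using in_quotient_imp_subset[OF eqv] assms(1) finite_subset by blast
    show "\<forall>K\<in>C // R. \<forall>K'\<in>C // R. K \<noteq> K' \<longrightarrow> K \<inter> K' = {}"
      using quotient_disj[OF eqv] by blast
  qed
  also have "\<dots> = vG \<delta> E C"
    unfolding Union_quotient[OF eqv] vG_def ..
  finally show ?thesis .
qed

section \<open>Bias in a caterpillar\<close>

definition path_share :: "real \<Rightarrow> nat \<Rightarrow> real" where
  "path_share \<delta> n = \<delta> ^ n / (real n + 1)"

text \<open>For a path on \<open>n + 1\<close> vertices, with \<open>a, b \<in> {0, 1}\<close> recording whether sender and
  receiver lie on it, \<open>bias_count n a b\<close> counts the terms \<open>b\<^sup>s\<^sub>r\<close>, \<open>b\<^sup>s\<^sub>w\<close>, \<open>b\<^sup>w\<^sub>r\<close>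
  of the effective bias whose two players both lie on the path.\<close>

definition bias_count :: "nat \<Rightarrow> real \<Rightarrow> real \<Rightarrow> real" where
  "bias_count n a b = a * b + (real n + 1 - a - b) * (a + b)"

lemma witness_count_eq_bias_count:
  assumes "finite V" "I \<subseteq> V" "s \<noteq> r" "card I = n + 1"
  shows "of_bool (r \<in> I \<and> s \<in> I)
      + (\<Sum>w\<in>V - {s, r}. of_bool (w \<in> I \<and> s \<in> I) + of_bool (r \<in> I \<and> w \<in> I))
    = bias_count n (of_bool (s \<in> I)) (of_bool (r \<in> I))"
proof -
  have "(V - {s, r}) \<inter> I = I - I \<inter> {s, r}"
    using assms(2) by auto
  then have "card ((V - {s, r}) \<inter> I) = card I - card (I \<inter> {s, r})"
    by (simp add: card_Diff_subset)
  moreover have "real (card (I \<inter> {s, r})) = of_bool (s \<in> I) + of_bool (r \<in> I)"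
    using assms(3) by (cases "s \<in> I"; cases "r \<in> I") (auto simp: Int_insert_right)
  moreover have "card (I \<inter> {s, r}) \<le> card I"
    using assms(1,2) finite_subset by (intro card_mono) auto
  ultimately have sum_I: "(\<Sum>w\<in>V - {s, r}. of_bool (w \<in> I) :: real)
      = real n + 1 - of_bool (s \<in> I) - of_bool (r \<in> I)"
    using assms(1,4) by (simp add: of_nat_diff)
  have "of_bool (w \<in> I \<and> s \<in> I) + of_bool (r \<in> I \<and> w \<in> I)
      = (of_bool (s \<in> I) + of_bool (r \<in> I)) * (of_bool (w \<in> I) :: real)" for w
    by auto
  moreover have "of_bool (r \<in> I \<and> s \<in> I) = of_bool (s \<in> I) * (of_bool (r \<in> I) :: real)"
    by auto
  ultimately have "of_bool (r \<in> I \<and> s \<in> I)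
      + (\<Sum>w\<in>V - {s, r}. of_bool (w \<in> I \<and> s \<in> I) + of_bool (r \<in> I \<and> w \<in> I))
    = of_bool (s \<in> I) * of_bool (r \<in> I)
      + (of_bool (s \<in> I) + of_bool (r \<in> I)) * (\<Sum>w\<in>V - {s, r}. of_bool (w \<in> I) :: real)"
    by (simp only: sum_distrib_left)
  also have "\<dots> = bias_count n (of_bool (s \<in> I)) (of_bool (r \<in> I))"
    unfolding sum_I bias_count_def by (simp only: mult.commute)
  finally show ?thesis .
qed

context caterpillar
begin

lemma vG_eq_sum_unanimity:
  assumes "C \<subseteq> V"
  shows "vG \<delta> E C = (\<Sum>p\<in>V. \<Sum>q\<in>V - {p}. \<delta> ^ cdist p q * (if interval p q \<subseteq> C then 1 else 0))"
proof -
  have ends_in_C: "p \<in> C \<and> q \<in> C" if "interval p q \<subseteq> C" "p \<in> V" "q \<in> V" for p q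
    using that by (auto simp: interval_def)
  have "vG \<delta> E C = (\<Sum>p\<in>C. \<Sum>q\<in>C - {p}. \<delta> ^ cdist p q * (if interval p q \<subseteq> C then 1 else 0))"
    unfolding vG_def
  proof (intro sum.cong refl)
    fix p q
    assume "p \<in> C" "q \<in> C - {p}"
    then have "p \<in> V" "q \<in> V"
      using assms by auto
    then show "dpow \<delta> E C p q = \<delta> ^ cdist p q * (if interval p q \<subseteq> C then 1 else 0)"
      by (simp add: dpow_eq[OF assms])
  qed
  also have "\<dots> = (\<Sum>p\<in>C. \<Sum>q\<in>V - {p}. \<delta> ^ cdist p q * (if interval p q \<subseteq> C then 1 else 0))"
    using assms finite_V ends_in_C by (intro sum.cong refl sum.mono_neutral_left) auto
  also have "\<dots> = (\<Sum>p\<in>V. \<Sum>q\<in>V - {p}. \<delta> ^ cdist p q * (if interval p q \<subseteq> C then 1 else 0))"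
    using assms finite_V
    by (intro sum.mono_neutral_left)
      (auto intro!: sum.neutral split: if_splits dest: ends_in_C)
  finally show ?thesis .
qed

lemma shapley_vG:
  assumes "X \<subseteq> V" "j \<in> X" "\<And>S. S \<subseteq> X \<Longrightarrow> u S = vG \<delta> E S"
  shows "shapley X u j = (\<Sum>p\<in>V. \<Sum>q\<in>V - {p}. \<delta> ^ cdist p q *
            (if interval p q \<subseteq> X \<and> j \<in> interval p q then 1 / real (card (interval p q)) else 0))"
proof -
  have "finite X"
    using assms finite_V finite_subset by blast
  have "shapley X u j = shapley X
      (\<lambda>S. \<Sum>p\<in>V. 1 * (\<Sum>q\<in>V - {p}. \<delta> ^ cdist p q * (if interval p q \<subseteq> S then 1 else 0))) j"
    using assms vG_eq_sum_unanimity by (intro shapley_cong) auto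
  also have "\<dots> = (\<Sum>p\<in>V. 1 * shapley X
      (\<lambda>S. \<Sum>q\<in>V - {p}. \<delta> ^ cdist p q * (if interval p q \<subseteq> S then 1 else 0)) j)"
    by (rule shapley_linear)
  also have "\<dots> = (\<Sum>p\<in>V. \<Sum>q\<in>V - {p}.
      \<delta> ^ cdist p q * shapley X (\<lambda>S. if interval p q \<subseteq> S then 1 else 0) j)"
    by (simp add: shapley_linear)
  finally show ?thesis
    by (simp add: shapley_unanimity[OF \<open>finite X\<close> assms(2)])
qed

lemma bpow_eq:
  assumes "i \<in> V" "j \<in> V" "i \<noteq> j"
  shows "bpow \<delta> E V E j i
    = (\<Sum>p\<in>V. \<Sum>q\<in>V - {p}. path_share \<delta> (cdist p q) * of_bool (i \<in> interval p q \<and> j \<in> interval p q))"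
proof -
  have interval_subset: "interval p q \<subseteq> V" for p q
    by (auto simp: interval_def)
  have with_i: "shapley V (rgame \<delta> E E) j = (\<Sum>p\<in>V. \<Sum>q\<in>V - {p}. \<delta> ^ cdist p q *
      (if interval p q \<subseteq> V \<and> j \<in> interval p q then 1 / real (card (interval p q)) else 0))"
    using assms finite_V finite_subset by (intro shapley_vG) (auto intro!: rgame_eq_vG)
  have without_i: "shapley (V - {i}) (rgame \<delta> E (restr E (V - {i}))) j
    = (\<Sum>p\<in>V. \<Sum>q\<in>V - {p}. \<delta> ^ cdist p q *
      (if interval p q \<subseteq> V - {i} \<and> j \<in> interval p q then 1 / real (card (interval p q)) else 0))"
    using assms finite_V finite_subset
    by (intro shapley_vG) (auto intro!: rgame_eq_vG simp: restr_def)
  have summand: "\<delta> ^ cdist p q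
        * (if interval p q \<subseteq> V \<and> j \<in> interval p q then 1 / real (card (interval p q)) else 0)
      - \<delta> ^ cdist p q
        * (if interval p q \<subseteq> V - {i} \<and> j \<in> interval p q then 1 / real (card (interval p q)) else 0)
      = path_share \<delta> (cdist p q) * of_bool (i \<in> interval p q \<and> j \<in> interval p q)"
    if "p \<in> V" "q \<in> V" for p q
  proof -
    have "interval p q \<subseteq> V - {i} \<longleftrightarrow> i \<notin> interval p q"
      using interval_subset by auto
    then show ?thesis
      using interval_subset card_interval[OF that] by (simp add: path_share_def)
  qed
  show ?thesis
    unfolding bpow_def with_i without_i sum_subtractf[symmetric]
    by (intro sum.cong refl) (simp add: summand)
qed

lemma beff_eq:
  assumes "s \<in> V" "r \<in> V" "s \<noteq> r"
  shows "beff \<delta> E V E s r (V - {s, r}) = (\<Sum>p\<in>V. \<Sum>q\<in>V - {p}. path_share \<delta> (cdist p q) *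
      bias_count (cdist p q) (of_bool (s \<in> interval p q)) (of_bool (r \<in> interval p q)))
    / (real (card V) - 1)"
proof -
  define f where "f p q = path_share \<delta> (cdist p q)" for p q
  have "card {s, r} \<le> card V"
    using assms finite_V by (intro card_mono) auto
  then have card_W: "real (card (V - {s, r})) + 1 = real (card V) - 1"
    using assms finite_V by (simp add: card_Diff_subset of_nat_diff)
  have "bpow \<delta> E V E s r + (\<Sum>w\<in>V - {s, r}. bpow \<delta> E V E s w + bpow \<delta> E V E w r)
      = (\<Sum>p\<in>V. \<Sum>q\<in>V - {p}. f p q * of_bool (r \<in> interval p q \<and> s \<in> interval p q))
      + (\<Sum>w\<in>V - {s, r}. \<Sum>p\<in>V. \<Sum>q\<in>V - {p}. f p q * (of_bool (w \<in> interval p q \<and> s \<in> interval p q)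
          + of_bool (r \<in> interval p q \<and> w \<in> interval p q)))"
  proof (intro arg_cong2[where f = "(+)"] sum.cong refl)
    show "bpow \<delta> E V E s r
      = (\<Sum>p\<in>V. \<Sum>q\<in>V - {p}. f p q * of_bool (r \<in> interval p q \<and> s \<in> interval p q))"
      unfolding f_def using assms by (simp add: bpow_eq del: sum_mult_of_bool_eq)
    fix w
    assume "w \<in> V - {s, r}"
    then have "w \<in> V" "w \<noteq> s" "r \<noteq> w"
      by auto
    then show "bpow \<delta> E V E s w + bpow \<delta> E V E w r = (\<Sum>p\<in>V. \<Sum>q\<in>V - {p}. f p q *
        (of_bool (w \<in> interval p q \<and> s \<in> interval p q)
          + of_bool (r \<in> interval p q \<and> w \<in> interval p q)))"
      unfolding f_def using assms bpow_eq[of w s] bpow_eq[of r w]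
      by (simp add: sum.distrib distrib_left del: sum_mult_of_bool_eq)
  qed
  also have "\<dots> = (\<Sum>p\<in>V. \<Sum>q\<in>V - {p}. f p q * (of_bool (r \<in> interval p q \<and> s \<in> interval p q)
      + (\<Sum>w\<in>V - {s, r}. of_bool (w \<in> interval p q \<and> s \<in> interval p q)
          + of_bool (r \<in> interval p q \<and> w \<in> interval p q))))"
    by (subst sum.swap)
      (simp add: sum.swap[of _ "V - {s, r}"] sum_distrib_left sum.distrib distrib_left
        del: sum_mult_of_bool_eq)
  also have "\<dots> = (\<Sum>p\<in>V. \<Sum>q\<in>V - {p}. f p q * bias_count (cdist p q) (of_bool (s \<in> interval p q))
      (of_bool (r \<in> interval p q)))"
    using assms(3) finite_V card_interval
    by (intro sum.cong refl arg_cong2[where f = "(*)"] witness_count_eq_bias_count)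
      (auto simp: interval_def)
  finally show ?thesis
    unfolding beff_def card_W f_def by simp
qed

end

section \<open>The two-star trees\<close>

lemma sum_distinct_pairs_by_class:
  fixes F :: "'a \<Rightarrow> 'a \<Rightarrow> real" and cls :: "'a \<Rightarrow> 'b"
  assumes "finite V" "finite I" "cls ` V \<subseteq> I"
    and "\<And>p q. p \<in> V \<Longrightarrow> q \<in> V \<Longrightarrow> p \<noteq> q \<Longrightarrow> F p q = \<Phi> (cls p) (cls q)"
  defines "n a \<equiv> real (card {p \<in> V. cls p = a})"
  shows "(\<Sum>p\<in>V. \<Sum>q\<in>V - {p}. F p q) = (\<Sum>a\<in>I. \<Sum>b\<in>I. n a * n b * \<Phi> a b) - (\<Sum>a\<in>I. n a * \<Phi> a a)"
proof -
  have by_class: "(\<Sum>p\<in>V. g (cls p)) = (\<Sum>a\<in>I. n a * g a)" for g :: "'b \<Rightarrow> real"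
    using sum.group[OF assms(1-3), of "\<lambda>p. g (cls p)"] by (simp add: n_def)
  have "(\<Sum>q\<in>V - {p}. F p q) = (\<Sum>q\<in>V. \<Phi> (cls p) (cls q)) - \<Phi> (cls p) (cls p)" if "p \<in> V" for p
  proof -
    have "(\<Sum>q\<in>V - {p}. F p q) = (\<Sum>q\<in>V - {p}. \<Phi> (cls p) (cls q))"
      using that assms(4) by (intro sum.cong) auto
    then show ?thesis
      using that assms(1) by (simp add: sum_diff1)
  qed
  then have "(\<Sum>p\<in>V. \<Sum>q\<in>V - {p}. F p q) = (\<Sum>p\<in>V. (\<Sum>q\<in>V. \<Phi> (cls p) (cls q)) - \<Phi> (cls p) (cls p))"
    by simp
  also have "\<dots> = (\<Sum>a\<in>I. \<Sum>b\<in>I. n a * n b * \<Phi> a b) - (\<Sum>a\<in>I. n a * \<Phi> a a)"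
    using by_class[of "\<lambda>a. \<Sum>b\<in>I. n b * \<Phi> a b"] by_class[of "\<lambda>a. \<Phi> a a"]
    by (simp add: sum_subtractf by_class sum_distrib_left mult.assoc)
  finally show ?thesis .
qed

text \<open>The spine of the hub-hub tree is \<open>h\<^sub>k h\<^sub>l\<close>, that of the leaf-leaf tree is
  \<open>h\<^sub>k a\<^sub>1 b\<^sub>1 h\<^sub>l\<close>; all other vertices are legs.\<close>

fun pos_hub :: "vtx \<Rightarrow> int" where
  "pos_hub HK = 0" | "pos_hub (A i) = 0" | "pos_hub HL = 1" | "pos_hub (B j) = 1"

fun leg_hub :: "vtx \<Rightarrow> nat" where
  "leg_hub HK = 0" | "leg_hub (A i) = 1" | "leg_hub HL = 0" | "leg_hub (B j) = 1"

fun pos_leaf :: "vtx \<Rightarrow> int" where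
  "pos_leaf HK = 0" | "pos_leaf (A i) = (if i = 1 then 1 else 0)"
| "pos_leaf HL = 3" | "pos_leaf (B j) = (if j = 1 then 2 else 3)"

fun leg_leaf :: "vtx \<Rightarrow> nat" where
  "leg_leaf HK = 0" | "leg_leaf (A i) = (if i = 1 then 0 else 1)"
| "leg_leaf HL = 0" | "leg_leaf (B j) = (if j = 1 then 0 else 1)"

lemma mem_starsV [simp]:
  "HK \<in> starsV k l" "HL \<in> starsV k l" "A i \<in> starsV k l \<longleftrightarrow> 1 \<le> i \<and> i \<le> k"
  "B j \<in> starsV k l \<longleftrightarrow> 1 \<le> j \<and> j \<le> l"
  unfolding starsV_def by auto

lemma finite_starsV [simp]: "finite (starsV k l)"
  unfolding starsV_def by simp

lemma card_starsV: "card (starsV k l) = k + l + 2"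
proof -
  have "starsV k l = insert HK (insert HL (A ` {1..k} \<union> B ` {1..l}))"
    unfolding starsV_def by auto
  moreover have "card (A ` {1..k} \<union> B ` {1..l}) = k + l"
    by (subst card_Un_disjoint) (auto simp: card_image inj_on_def)
  moreover have "HK \<notin> A ` {1..k} \<union> B ` {1..l}" "HL \<notin> A ` {1..k} \<union> B ` {1..l}"
    by auto
  ultimately show ?thesis
    by simp
qed

lemma caterpillar_hub: "caterpillar (starsV k l) (Thh k l) pos_hub leg_hub"
proof
  show "leg_hub x \<le> 1" for x
    by (cases x) auto
  show "x = y" if "x \<in> starsV k l" "y \<in> starsV k l" "leg_hub x = 0" "leg_hub y = 0"
    "pos_hub x = pos_hub y" for x y
    using that by (cases x; cases y) auto
  show "\<exists>w\<in>starsV k l. leg_hub w = 0 \<and> pos_hub w = z"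
    if "x \<in> starsV k l" "y \<in> starsV k l" "pos_hub x \<le> z" "z \<le> pos_hub y" for x y z
  proof -
    have "z = 0 \<or> z = 1"
      using that by (cases x; cases y) auto
    then show ?thesis
      by (auto intro: bexI[of _ HK] bexI[of _ HL])
  qed
  show "Thh k l
    = {{x, y} | x y. x \<in> starsV k l \<and> y \<in> starsV k l \<and> cat_dist pos_hub leg_hub x y = 1}"
    (is "_ = ?D")
  proof (intro set_eqI iffI)
    have unit_edge: "{x, y} \<in> ?D"
      if "x \<in> starsV k l" "y \<in> starsV k l" "cat_dist pos_hub leg_hub x y = 1" for x y
      using that by blast
    fix e
    assume "e \<in> Thh k l"
    then consider "e = {HK, HL}" | i where "i \<in> {1..k}" "e = {HK, A i}"
      | j where "j \<in> {1..l}" "e = {HL, B j}"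
      unfolding Thh_def starsE_def by auto
    then show "e \<in> ?D"
      by cases (simp_all only:, (rule unit_edge; simp add: cat_dist_def)+)
  next
    fix e
    assume "e \<in> ?D"
    then obtain x y where "e = {x, y}" "x \<in> starsV k l" "y \<in> starsV k l"
      "cat_dist pos_hub leg_hub x y = 1"
      by blast
    then show "e \<in> Thh k l"
      unfolding Thh_def starsE_def
      by (cases x; cases y) (auto simp: cat_dist_def insert_commute split: if_splits)
  qed
qed simp

lemma caterpillar_leaf:
  assumes "k \<ge> 1" "l \<ge> 1"
  shows "caterpillar (starsV k l) (Tll k l) pos_leaf leg_leaf"
proof
  show "leg_leaf x \<le> 1" for x
    by (cases x) auto
  show "x = y" if "x \<in> starsV k l" "y \<in> starsV k l" "leg_leaf x = 0" "leg_leaf y = 0"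
    "pos_leaf x = pos_leaf y" for x y
    using that by (cases x; cases y) (auto split: if_splits)
  show "\<exists>w\<in>starsV k l. leg_leaf w = 0 \<and> pos_leaf w = z"
    if "x \<in> starsV k l" "y \<in> starsV k l" "pos_leaf x \<le> z" "z \<le> pos_leaf y" for x y z
  proof -
    have "0 \<le> pos_leaf x" "pos_leaf y \<le> 3"
      by (cases x; simp) (cases y; simp)
    then have "z = 0 \<or> z = 1 \<or> z = 2 \<or> z = 3"
      using that by linarith
    then show ?thesis
      using assms by (auto intro: bexI[of _ HK] bexI[of _ HL] bexI[of _ "A 1"] bexI[of _ "B 1"])
  qed
  show "Tll k l
    = {{x, y} | x y. x \<in> starsV k l \<and> y \<in> starsV k l \<and> cat_dist pos_leaf leg_leaf x y = 1}"
    (is "_ = ?D")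
  proof (intro set_eqI iffI)
    have unit_edge: "{x, y} \<in> ?D"
      if "x \<in> starsV k l" "y \<in> starsV k l" "cat_dist pos_leaf leg_leaf x y = 1" for x y
      using that by blast
    fix e
    assume "e \<in> Tll k l"
    then consider "e = {A 1, B 1}" | i where "i \<in> {1..k}" "e = {HK, A i}"
      | j where "j \<in> {1..l}" "e = {HL, B j}"
      unfolding Tll_def starsE_def by auto
    then show "e \<in> ?D"
      using assms by cases (simp_all only:, (rule unit_edge; simp add: cat_dist_def)+)
  next
    fix e
    assume "e \<in> ?D"
    then obtain x y where "e = {x, y}" "x \<in> starsV k l" "y \<in> starsV k l"
      "cat_dist pos_leaf leg_leaf x y = 1"
      by blast
    then show "e \<in> Tll k l"
      unfolding Tll_def starsE_def
      by (cases x; cases y) (auto simp: cat_dist_def insert_commute split: if_splits)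
  qed
qed simp

fun hub_class :: "vtx \<Rightarrow> nat" where
  "hub_class HK = 0" | "hub_class HL = 1" | "hub_class (A i) = 2" | "hub_class (B j) = 3"

definition hub_matrix :: "real \<Rightarrow> nat \<Rightarrow> nat \<Rightarrow> real" where
  "hub_matrix \<delta> a b =
    (let s = path_share \<delta> in
     [[0, s 1, s 1, 3 * s 2],
      [s 1, 0, 3 * s 2, s 1],
      [s 1, 3 * s 2, 2 * s 2, 5 * s 3],
      [3 * s 2, s 1, 5 * s 3, 2 * s 2]] ! a ! b)"


lemma hub_pair_term:
  assumes "p \<in> starsV k l" "q \<in> starsV k l" "p \<noteq> q"
  shows "path_share \<delta> (cat_dist pos_hub leg_hub p q) * bias_count (cat_dist pos_hub leg_hub p q)
      (of_bool (HK \<in> caterpillar.interval (starsV k l) pos_hub leg_hub p q))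
      (of_bool (HL \<in> caterpillar.interval (starsV k l) pos_hub leg_hub p q))
    = hub_matrix \<delta> (hub_class p) (hub_class q)"
  using assms
  by (cases p; cases q)
    (simp_all add: caterpillar.interval_def[OF caterpillar_hub] cat_dist_def bias_count_def
      hub_matrix_def Let_def numeral_2_eq_2 numeral_3_eq_3)

lemma card_hub_class:
  assumes "a < 4"
  shows "card {p \<in> starsV k l. hub_class p = a} = [1, 1, k, l] ! a"
proof -
  have "a \<in> {0, 1, 2, 3}"
    using assms by auto
  then have "x \<in> {p \<in> starsV k l. hub_class p = a}
      \<longleftrightarrow> x \<in> [{HK}, {HL}, A ` {1..k}, B ` {1..l}] ! a" for x
    by (cases x) auto
  then have "{p \<in> starsV k l. hub_class p = a} = [{HK}, {HL}, A ` {1..k}, B ` {1..l}] ! a"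
    by blast
  then show ?thesis
    using assms by (auto simp: card_image inj_on_def numeral_eq_Suc less_Suc_eq)
qed

lemma b_hub_eq:
  "b_hub k l \<delta> = (path_share \<delta> 1 * (2 + 2 * real k + 2 * real l)
     + path_share \<delta> 2 * (4 * real k + 4 * real l + 2 * real k ^ 2 + 2 * real l ^ 2)
     + path_share \<delta> 3 * (10 * real k * real l)) / (real k + real l + 1)"
proof -
  have "b_hub k l \<delta> = (\<Sum>p\<in>starsV k l. \<Sum>q\<in>starsV k l - {p}. hub_matrix \<delta> (hub_class p) (hub_class q))
      / (real (card (starsV k l)) - 1)"
    unfolding b_hub_def caterpillar.beff_eq[OF caterpillar_hub mem_starsV(1,2) vtx.distinct(3)]
    by (intro arg_cong[where f = "\<lambda>x. x / _"] sum.cong refl) (rule hub_pair_term; auto)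
  also have "real (card (starsV k l)) - 1 = real k + real l + 1"
    by (simp add: card_starsV)
  also have "(\<Sum>p\<in>starsV k l. \<Sum>q\<in>starsV k l - {p}. hub_matrix \<delta> (hub_class p) (hub_class q))
      = path_share \<delta> 1 * (2 + 2 * real k + 2 * real l)
        + path_share \<delta> 2 * (4 * real k + 4 * real l + 2 * real k ^ 2 + 2 * real l ^ 2)
        + path_share \<delta> 3 * (10 * real k * real l)"
  proof -
    have "hub_class p \<in> {0, 1, 2, 3}" for p
      by (cases p) auto
    then have "hub_class ` starsV k l \<subseteq> {0, 1, 2, 3}"
      by (simp add: image_subset_iff)
    then show ?thesis
      by (subst sum_distinct_pairs_by_class[where I = "{0, 1, 2, 3}"])
        (simp_all, simp add: card_hub_class hub_matrix_def Let_def algebra_simps power2_eq_square)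
  qed
  finally show ?thesis .
qed

fun leaf_class :: "vtx \<Rightarrow> nat" where
  "leaf_class HK = 0" | "leaf_class (A i) = (if i = 1 then 1 else 4)"
| "leaf_class (B j) = (if j = 1 then 2 else 5)" | "leaf_class HL = 3"

definition leaf_matrix :: "real \<Rightarrow> nat \<Rightarrow> nat \<Rightarrow> real" where
  "leaf_matrix \<delta> a b =
    (let s = path_share \<delta> in
     [[0, s 1, 3 * s 2, 5 * s 3, 0, 7 * s 4],
      [s 1, 0, s 1, 3 * s 2, 2 * s 2, 5 * s 3],
      [3 * s 2, s 1, 0, s 1, 5 * s 3, 2 * s 2],
      [5 * s 3, 3 * s 2, s 1, 0, 7 * s 4, 0],
      [0, 2 * s 2, 5 * s 3, 7 * s 4, 0, 9 * s 5],
      [7 * s 4, 5 * s 3, 2 * s 2, 0, 9 * s 5, 0]] ! a ! b)"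

lemma leaf_pair_term:
  assumes "k \<ge> 1" "l \<ge> 1" "p \<in> starsV k l" "q \<in> starsV k l" "p \<noteq> q"
  shows "path_share \<delta> (cat_dist pos_leaf leg_leaf p q) * bias_count (cat_dist pos_leaf leg_leaf p q)
      (of_bool (A 1 \<in> caterpillar.interval (starsV k l) pos_leaf leg_leaf p q))
      (of_bool (B 1 \<in> caterpillar.interval (starsV k l) pos_leaf leg_leaf p q))
    = leaf_matrix \<delta> (leaf_class p) (leaf_class q)"
  using assms
  by (cases p; cases q)
    (simp_all add: caterpillar.interval_def[OF caterpillar_leaf[OF assms(1,2)]] cat_dist_def
      bias_count_def leaf_matrix_def Let_def numeral_eq_Suc)

lemma card_leaf_class:
  assumes "k \<ge> 1" "l \<ge> 1" "a < 6"
  shows "card {p \<in> starsV k l. leaf_class p = a} = [1, 1, 1, 1, k - 1, l - 1] ! a"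
proof -
  have "a \<in> {0, 1, 2, 3, 4, 5}"
    using assms(3) by auto
  then have "x \<in> {p \<in> starsV k l. leaf_class p = a}
      \<longleftrightarrow> x \<in> [{HK}, {A 1}, {B 1}, {HL}, A ` {2..k}, B ` {2..l}] ! a" for x
    using assms(1,2) by (cases x) auto
  then have "{p \<in> starsV k l. leaf_class p = a}
      = [{HK}, {A 1}, {B 1}, {HL}, A ` {2..k}, B ` {2..l}] ! a"
    by blast
  then show ?thesis
    using assms by (auto simp: card_image inj_on_def numeral_eq_Suc less_Suc_eq)
qed

lemma b_leaf_eq:
  assumes "k \<ge> 1" "l \<ge> 1"
  shows "b_leaf k l \<delta> = (path_share \<delta> 1 * 6 + path_share \<delta> 2 * (4 * real k + 4 * real l + 4)
     + path_share \<delta> 3 * (10 * real k + 10 * real l - 10)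
     + path_share \<delta> 4 * (14 * real k + 14 * real l - 28)
     + path_share \<delta> 5 * (18 * (real k - 1) * (real l - 1))) / (real k + real l + 1)"
proof -
  have ends: "A 1 \<in> starsV k l" "B 1 \<in> starsV k l" "A 1 \<noteq> B 1"
    using assms by auto
  have "b_leaf k l \<delta>
      = (\<Sum>p\<in>starsV k l. \<Sum>q\<in>starsV k l - {p}. leaf_matrix \<delta> (leaf_class p) (leaf_class q))
      / (real (card (starsV k l)) - 1)"
    unfolding b_leaf_def caterpillar.beff_eq[OF caterpillar_leaf[OF assms] ends]
    by (intro arg_cong[where f = "\<lambda>x. x / _"] sum.cong refl) (rule leaf_pair_term[OF assms]; auto)
  also have "real (card (starsV k l)) - 1 = real k + real l + 1"
    by (simp add: card_starsV)
  also have "(\<Sum>p\<in>starsV k l. \<Sum>q\<in>starsV k l - {p}. leaf_matrix \<delta> (leaf_class p) (leaf_class q))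
      = path_share \<delta> 1 * 6 + path_share \<delta> 2 * (4 * real k + 4 * real l + 4)
        + path_share \<delta> 3 * (10 * real k + 10 * real l - 10)
        + path_share \<delta> 4 * (14 * real k + 14 * real l - 28)
        + path_share \<delta> 5 * (18 * (real k - 1) * (real l - 1))"
  proof -
    have "leaf_class p \<in> {0, 1, 2, 3, 4, 5}" for p
      by (cases p) auto
    then have "leaf_class ` starsV k l \<subseteq> {0, 1, 2, 3, 4, 5}"
      by (simp add: image_subset_iff)
    then show ?thesis
      using assms
      by (subst sum_distinct_pairs_by_class[where I = "{0, 1, 2, 3, 4, 5}"])
        (simp_all, simp add: card_leaf_class leaf_matrix_def Let_def algebra_simps power2_eq_square
          of_nat_diff)
  qed
  finally show ?thesis .
qed

section \<open>The sign of Delta\<close>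

definition gap_poly :: "real \<Rightarrow> real \<Rightarrow> real \<Rightarrow> real" where
  "gap_poly x y d = (x + y) * (d + 4/3 * d^2 - 14/5 * d^4) + 2/3 * (x^2 + y^2) * d^2
     + x * y * (5/2 * d^3 - 3 * d^5)"

lemma Delta_eq:
  assumes "k \<ge> 1" "l \<ge> 1"
  shows "Delta k l \<delta> = gap_poly (real k - 1) (real l - 1) \<delta> / (real k + real l + 1)"
  unfolding Delta_def b_hub_eq b_leaf_eq[OF assms] diff_divide_distrib[symmetric]
  by (simp add: gap_poly_def path_share_def field_simps power2_eq_square)

lemma gap_poly_pos_degenerate:
  fixes x y d :: real
  assumes d: "0 < d" "d < 1" and xy: "x \<ge> 0" "y \<ge> 0" "x * y = 0" "x + y \<ge> 1"
  shows "gap_poly x y d > 0"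
proof -
  define s where "s = x + y"
  have "d ^ 3 \<le> d"
    using d power_decreasing[of 1 3 d] by simp
  have "x^2 + y^2 = s^2"
    unfolding s_def using xy by (simp add: power2_eq_square algebra_simps)
  then have M: "gap_poly x y d = d * (s * (1 + 4/3 * d - 14/5 * d^3) + 2/3 * s^2 * d)"
    unfolding gap_poly_def xy(3) s_def[symmetric] by (simp add: algebra_simps eval_nat_numeral)
  have "s \<ge> 1"
    using xy s_def by simp
  then have "2/3 * d * (s * (s - 1)) \<ge> 0"
    using d by simp
  then have "s * (1 + 4/3 * d - 14/5 * d^3) + 2/3 * s^2 * d \<ge> s * (1 + 2 * d - 14/5 * d^3)"
    by (simp add: algebra_simps power2_eq_square)
  moreover have "s * (1 + 2 * d - 14/5 * d^3) > 0"
    using \<open>s \<ge> 1\<close> \<open>d ^ 3 \<le> d\<close> d by (intro mult_pos_pos) linarith+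
  ultimately show ?thesis
    unfolding M using d by simp
qed

lemma gap_poly_pos_nondegenerate:
  fixes x y d :: real
  assumes d: "0 < d" "d < 1" and xy: "x \<ge> 1" "y \<ge> 1" "x + y \<ge> 3"
  shows "gap_poly x y d > 0"
proof -
  define s Q P c where "s = x + y" and "Q = x^2 + y^2" and "P = x * y" and "c = 5/2 * d^2 - 3 * d^4"
  have "d^2 \<le> d" "d^4 \<le> d^2" "d^3 \<le> d"
    using d power_decreasing[of 1 2 d] power_decreasing[of 2 4 d] power_decreasing[of 1 3 d]
    by simp_all
  then have c: "c + d / 2 \<ge> 0"
    unfolding c_def by linarith
  have "Q - 2 * P = (x - y)^2" "2 * Q - s^2 = (x - y)^2"
    unfolding Q_def P_def s_def by (simp_all add: power2_eq_square algebra_simps)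
  then have PQ: "Q - 2 * P \<ge> 0" "2 * Q - s^2 \<ge> 0"
    by simp_all
  have "s \<ge> 3" "P \<ge> 0"
    using xy by (simp_all add: s_def P_def)
  have M: "gap_poly x y d = d * (s * (1 + 4/3 * d - 14/5 * d^3) + 2/3 * Q * d + P * c)"
    unfolding gap_poly_def s_def Q_def P_def c_def by (simp add: algebra_simps eval_nat_numeral)
  \<comment> \<open>\<open>2/3 Q d + P c \<ge> 5/12 Q d \<ge> 5/8 s d\<close>, as \<open>c \<ge> -d/2\<close>, \<open>2 P \<le> Q\<close> and \<open>2 Q \<ge> s^2 \<ge> 3 s\<close>\<close>
  have "P * (c + d / 2) \<ge> 0" "d * (Q - 2 * P) \<ge> 0" "d * (2 * Q - s^2) \<ge> 0" "d * (s * (s - 3)) \<ge> 0"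
    using \<open>P \<ge> 0\<close> c PQ \<open>s \<ge> 3\<close> d by simp_all
  moreover have "s * (1 + 47/24 * d - 14/5 * d^3) > 0"
    using \<open>s \<ge> 3\<close> \<open>d^3 \<le> d\<close> d by (intro mult_pos_pos) linarith+
  ultimately have "s * (1 + 4/3 * d - 14/5 * d^3) + 2/3 * Q * d + P * c > 0"
    by (simp add: algebra_simps power2_eq_square)
  then show ?thesis
    unfolding M using d by simp
qed

definition crit_poly :: "real \<Rightarrow> real" where
  "crit_poly d = 2 + 4 * d + 5/2 * d^2 - 28/5 * d^3 - 3 * d^4"

lemma gap_poly_1_1: "gap_poly 1 1 d = d * crit_poly d"
  unfolding gap_poly_def crit_poly_def by (simp add: algebra_simps eval_nat_numeral)

lemma crit_poly_pos:
  assumes "0 < d" "d \<le> 3/5"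
  shows "crit_poly d > 0"
proof -
  have "d * d^k \<le> 3/5 * d^k" for k
    using mult_right_mono[of d "3/5" "d^k"] assms by simp
  from this[of 1] this[of 2] this[of 3] have "d^2 \<le> 3/5 * d" "d^3 \<le> 3/5 * d^2" "d^4 \<le> 3/5 * d^3"
    by (simp_all add: power2_eq_square eval_nat_numeral)
  then show ?thesis
    unfolding crit_poly_def using assms by linarith
qed

lemma crit_poly_strict_antimono:
  assumes "3/5 \<le> u" "u < v" "v \<le> 1"
  shows "crit_poly v < crit_poly u"
proof (rule DERIV_neg_imp_decreasing[OF assms(2)])
  fix x :: real
  assume x: "u \<le> x" "x \<le> v"
  have "(crit_poly has_real_derivative 4 + 5 * x - 84/5 * x^2 - 12 * x^3) (at x)"
    unfolding crit_poly_def by (auto intro!: derivative_eq_intros simp: eval_nat_numeral)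
  moreover have "3/5 * x^k \<le> x * x^k" for k
    using mult_right_mono[of "3/5" x "x^k"] x assms by simp
  from this[of 1] this[of 2] have "x^2 \<ge> 3/5 * x" "x^3 \<ge> 3/5 * x^2"
    by (simp_all add: power2_eq_square eval_nat_numeral)
  then have "4 + 5 * x - 84/5 * x^2 - 12 * x^3 < 0"
    using x assms by linarith
  ultimately show "\<exists>y. (crit_poly has_real_derivative y) (at x) \<and> y < 0"
    by blast
qed

lemma crit_poly_root:
  "\<exists>c. 0.9948 < c \<and> c < 0.9950 \<and> crit_poly c = 0
     \<and> (\<forall>d\<in>{0<..<c}. crit_poly d > 0) \<and> (\<forall>d\<in>{c<..<1}. crit_poly d < 0)"
proof -
  have signs: "crit_poly 0.9948 > 0" "crit_poly 0.995 < 0"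
    unfolding crit_poly_def by (simp_all add: eval_nat_numeral)
  have "continuous_on {0.9948..0.995} crit_poly"
    unfolding crit_poly_def by (intro continuous_intros)
  then obtain c where c: "0.9948 \<le> c" "c \<le> 0.995" "crit_poly c = 0"
    using IVT2'[of crit_poly "0.995" 0 "0.9948"] signs by force
  then have "c \<noteq> 0.9948" "c \<noteq> 0.995"
    using signs by (metis less_irrefl)+
  moreover have "crit_poly d > 0" if "d \<in> {0<..<c}" for d
    using that c crit_poly_pos[of d] crit_poly_strict_antimono[of d c] by (cases "d \<le> 3/5") auto
  moreover have "crit_poly d < 0" if "d \<in> {c<..<1}" for d
    using that c crit_poly_strict_antimono[of c d] by auto
  ultimately show ?thesis
    using c by (intro exI[of _ c]) auto
qed

lemma Delta_1_1: "Delta 1 1 \<delta> = 0"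
  using Delta_eq[of 1 1] by (simp add: gap_poly_def)

lemma Delta_pos:
  assumes "k \<ge> 1" "l \<ge> 1" "(k, l) \<notin> {(1, 1), (2, 2)}" "0 < \<delta>" "\<delta> < 1"
  shows "Delta k l \<delta> > 0"
proof -
  have "gap_poly (real k - 1) (real l - 1) \<delta> > 0"
  proof (cases "k = 1 \<or> l = 1")
    case True
    then show ?thesis
      using assms by (intro gap_poly_pos_degenerate) auto
  next
    case False
    then show ?thesis
      using assms by (intro gap_poly_pos_nondegenerate) auto
  qed
  then show ?thesis
    unfolding Delta_eq[OF assms(1,2)] by simp
qed

lemma Delta_2_2_sign_change:
  "\<exists>c. 0.9948 < c \<and> c < 0.9950 \<and> Delta 2 2 c = 0
     \<and> (\<forall>\<delta>\<in>{0<..<c}. Delta 2 2 \<delta> > 0) \<and> (\<forall>\<delta>\<in>{c<..<1}. Delta 2 2 \<delta> < 0)"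
proof -
  have Delta_2_2: "Delta 2 2 \<delta> = \<delta> * crit_poly \<delta> / 5" for \<delta>
    using Delta_eq[of 2 2] gap_poly_1_1 by simp
  obtain c where "0.9948 < c" "c < 0.9950" "crit_poly c = 0"
    "\<forall>d\<in>{0<..<c}. crit_poly d > 0" "\<forall>d\<in>{c<..<1}. crit_poly d < 0"
    using crit_poly_root by blast
  then show ?thesis
    by (intro exI[of _ c]) (auto simp: Delta_2_2 mult_pos_neg)
qed

lemma beta_antimono: "1 \<le> m \<Longrightarrow> m \<le> n \<Longrightarrow> beta n \<le> beta m"
  unfolding beta_def by (intro divide_left_mono mult_mono mult_pos_pos) auto

lemma pt_count_antimono:
  assumes "pt_count b N" "pt_count b' N'" "b' \<le> b"
  shows "N \<le> N'"
proof (rule ccontr)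
  assume "\<not> N \<le> N'"
  then have "b < beta (N - 1)" "beta (N - 1) \<le> beta N'"
    using assms(1,2) beta_antimono[of N' "N - 1"] unfolding pt_count_def by auto
  moreover have "beta N' \<le> b'"
    using assms(2) unfolding pt_count_def by simp
  ultimately show False
    using assms(3) by linarith
qed

lemma leaf_weakly_more_if_Delta_nonneg: "Delta k l \<delta> \<ge> 0 \<Longrightarrow> leaf_weakly_more k l \<delta>"
  unfolding leaf_weakly_more_def Delta_def using pt_count_antimono by auto

theorem proposition6:
  fixes k l :: nat
  assumes "k \<ge> 1" and "l \<ge> 1"
  shows "((k, l) = (1, 1) \<longrightarrow>
            (\<forall>\<delta>\<in>{0<..<1}. Delta k l \<delta> = 0 \<and> leaf_weakly_more k l \<delta>))
       \<and> ((k, l) \<notin> {(1, 1), (2, 2)} \<longrightarrow>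
            (\<forall>\<delta>\<in>{0<..<1}. Delta k l \<delta> > 0 \<and> leaf_weakly_more k l \<delta>))
       \<and> ((k, l) = (2, 2) \<longrightarrow>
            (\<exists>\<delta>c. 0.9948 < \<delta>c \<and> \<delta>c < 0.9950 \<and> Delta k l \<delta>c = 0
               \<and> (\<forall>\<delta>\<in>{0<..<\<delta>c}. Delta k l \<delta> > 0)
               \<and> (\<forall>\<delta>\<in>{\<delta>c<..<1}. Delta k l \<delta> < 0)
               \<and> (\<forall>\<delta>\<in>{0<..\<delta>c}. leaf_weakly_more k l \<delta>)))"
proof (intro conjI impI)
  assume "(k, l) = (1, 1)"
  then show "\<forall>\<delta>\<in>{0<..<1}. Delta k l \<delta> = 0 \<and> leaf_weakly_more k l \<delta>"
    using Delta_1_1 leaf_weakly_more_if_Delta_nonneg by simp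
next
  assume "(k, l) \<notin> {(1, 1), (2, 2)}"
  then have "Delta k l \<delta> > 0" if "\<delta> \<in> {0<..<1}" for \<delta>
    using Delta_pos assms that by simp
  then show "\<forall>\<delta>\<in>{0<..<1}. Delta k l \<delta> > 0 \<and> leaf_weakly_more k l \<delta>"
    using leaf_weakly_more_if_Delta_nonneg less_imp_le by blast
next
  assume "(k, l) = (2, 2)"
  moreover obtain c where c: "0.9948 < c" "c < 0.9950" "Delta 2 2 c = 0"
    "\<forall>\<delta>\<in>{0<..<c}. Delta 2 2 \<delta> > 0" "\<forall>\<delta>\<in>{c<..<1}. Delta 2 2 \<delta> < 0"
    using Delta_2_2_sign_change by blast
  moreover have "leaf_weakly_more 2 2 \<delta>" if "\<delta> \<in> {0<..c}" for \<delta>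
  proof (cases "\<delta> = c")
    case False
    then have "\<delta> \<in> {0<..<c}"
      using that by auto
    then show ?thesis
      using c(4) leaf_weakly_more_if_Delta_nonneg less_imp_le by blast
  qed (simp add: c(3) leaf_weakly_more_if_Delta_nonneg)
  ultimately show "\<exists>\<delta>c. 0.9948 < \<delta>c \<and> \<delta>c < 0.9950 \<and> Delta k l \<delta>c = 0
               \<and> (\<forall>\<delta>\<in>{0<..<\<delta>c}. Delta k l \<delta> > 0)
               \<and> (\<forall>\<delta>\<in>{\<delta>c<..<1}. Delta k l \<delta> < 0)
               \<and> (\<forall>\<delta>\<in>{0<..\<delta>c}. leaf_weakly_more k l \<delta>)"
    by auto
qed

end
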